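(* Let $\kappa\in(0,4)$ and let $\alpha,\beta$ be the two roots of $m^2+(2-\kappa)m+1=0$; they are complex conjugate and non-real, and we label them so that $\operatorname{Im}\alpha>0$ and $\beta=\overline{\alpha}$. Define, for $\tau\ge 0$, $$u_0(\tau)=1+\frac{\sqrt{\kappa}}{\alpha-\beta}\left[\frac{e^{\alpha\tau}\operatorname{Erfc}\sqrt{\alpha\tau}}{\sqrt{\alpha}}-\frac{e^{\beta\tau}\operatorname{Erfc}\sqrt{\beta\tau}}{\sqrt{\beta}}\right].$$ Then $u_0$ is real-valued, $u_0'(\tau)>0$ for every $\tau>0$, and $u_0(\tau)\to 1$ as $\tau\to\infty$. In particular $u_0$ approaches the limit $1$ monotonically (increasingly).
   Context: $\operatorname{Erfc}$ denotes the complementary error function extended to an entire function of $z\in\mathbb{C}$: $\operatorname{Erfc}(z)=1-\frac{2}{\sqrt{\pi}}\int_0^z e^{-s^2}\,ds$. Square roots of complex numbers are principal square roots (argument in $(-\pi/2,\pi/2]$). *)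

theory Defs
  imports "HOL-Complex_Analysis.Complex_Analysis"
begin

text \<open>Complementary error function as an entire function:
  Erfc z = 1 - 2/sqrt pi * integral of exp(-s^2) from 0 to z
  (along the straight segment; the integrand is entire, so path independent).\<close>
definition Erfc :: "complex \<Rightarrow> complex" where
  "Erfc z = 1 - (2 / complex_of_real (sqrt pi)) *
              contour_integral (linepath 0 z) (\<lambda>s. exp (- (s ^ 2)))"

definition u0 :: "real \<Rightarrow> complex \<Rightarrow> complex \<Rightarrow> real \<Rightarrow> complex" where
  "u0 \<kappa> \<alpha> \<beta> \<tau> = 1 + (complex_of_real (sqrt \<kappa>) / (\<alpha> - \<beta>)) *
     (exp (\<alpha> * of_real \<tau>) * Erfc (csqrt (\<alpha> * of_real \<tau>)) / csqrt \<alpha>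
      - exp (\<beta> * of_real \<tau>) * Erfc (csqrt (\<beta> * of_real \<tau>)) / csqrt \<beta>)"

end

theory Submission
  imports Defs "HOL-Probability.Sinc_Integral"
begin

(* For a off the closed negative real axis, e^(a tau) Erfc(sqrt(a tau)) / sqrt a equals
   (2/pi) * integral_0^oo e^(-tau t^2) / (t^2 + a) dt: both sides solve y' = a y - 1/sqrt(pi tau)
   for tau > 0 and both tend to 1/sqrt a as tau -> 0+ (for the integral this is
   integral_0^oo dt / (t^2 + c^2) = pi / (2 c) with c = sqrt a), and a solution of y' = a y
   that vanishes at 0+ vanishes identically.  Since beta = cnj alpha, subtracting the two
   representations gives
     u0(tau) = 1 - (2 sqrt kappa / pi) * integral_0^oo e^(-tau t^2) / |t^2 + alpha|^2 dt,
   which is real, has the positive derivative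
     (2 sqrt kappa / pi) * integral_0^oo t^2 e^(-tau t^2) / |t^2 + alpha|^2 dt
   by differentiation under the integral sign, and tends to 1 by dominated convergence. *)

section \<open>The complementary error function\<close>

lemma has_field_derivative_Erfc:
  "(Erfc has_field_derivative - (2 / of_real (sqrt pi)) * exp (- (z\<^sup>2))) (at z)"
proof -
  let ?f = "\<lambda>s::complex. exp (- (s\<^sup>2))"
  have "((\<lambda>z. contour_integral (linepath 0 z) ?f) has_field_derivative ?f z) (at z)"
  proof (rule triangle_contour_integrals_convex_primitive[where S = UNIV, simplified])
    show "continuous_on UNIV ?f"
      by (intro continuous_intros)
    fix b c :: complex
    have "?f holomorphic_on convex hull {0, b, c}"
      by (intro holomorphic_intros)
    from has_chain_integral_chain_integral3[OF Cauchy_theorem_triangle[OF this]]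
    show "contour_integral (linepath 0 b) ?f + contour_integral (linepath b c) ?f +
        contour_integral (linepath c 0) ?f = 0" .
  qed
  then show ?thesis
    unfolding Erfc_def [abs_def] by (auto intro!: derivative_eq_intros)
qed

lemma Erfc_0 [simp]: "Erfc 0 = 1"
  by (simp add: Erfc_def)

lemma isCont_Erfc: "isCont Erfc z"
  using has_field_derivative_Erfc by (rule DERIV_isCont)

lemma csqrt_mult_of_real:
  assumes "0 \<le> t"
  shows "csqrt (z * of_real t) = csqrt z * of_real (sqrt t)"
proof (cases "t = 0")
  case False
  then have "csqrt (z * of_real t) = csqrt z * csqrt (of_real t)"
    using assms Arg_bounded[of z] by (intro csqrt_mult) auto
  then show ?thesis
    using assms by (simp add: csqrt_of_real)
qed simp

lemma Re_csqrt_pos: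
  assumes "z \<notin> \<real>\<^sub>\<le>\<^sub>0"
  shows "0 < Re (csqrt z)"
proof -
  have "Re (csqrt z) \<noteq> 0"
  proof
    assume "Re (csqrt z) = 0"
    then obtain y where "csqrt z = \<i> * of_real y"
      by (intro that[of "Im (csqrt z)"]) (simp add: complex_eq_iff)
    then have "z = (\<i> * of_real y)\<^sup>2"
      by (metis power2_csqrt)
    with assms show False
      by (simp add: power_mult_distrib complex_nonpos_Reals_iff)
  qed
  with Re_csqrt[of z] show ?thesis
    by linarith
qed

definition exp_erfc :: "complex \<Rightarrow> real \<Rightarrow> complex" where
  "exp_erfc a \<tau> = exp (a * of_real \<tau>) * Erfc (csqrt (a * of_real \<tau>)) / csqrt a"

lemma u0_eq_exp_erfc:
  "u0 \<kappa> \<alpha> \<beta> \<tau> = 1 + of_real (sqrt \<kappa>) / (\<alpha> - \<beta>) * (exp_erfc \<alpha> \<tau> - exp_erfc \<beta> \<tau>)"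
  by (simp add: u0_def exp_erfc_def)

lemma exp_erfc_0 [simp]: "exp_erfc a 0 = 1 / csqrt a"
  by (simp add: exp_erfc_def)

lemma tendsto_exp_erfc_at_right_0: "(exp_erfc a \<longlongrightarrow> exp_erfc a 0) (at_right 0)"
proof -
  have "((\<lambda>t. exp (a * of_real t) * Erfc (csqrt a * of_real (sqrt t))) \<longlongrightarrow> 1) (at_right 0)"
    by (auto intro!: tendsto_eq_intros isCont_tendsto_compose[OF isCont_Erfc])
  then have "((\<lambda>t. exp (a * of_real t) * Erfc (csqrt a * of_real (sqrt t)) / csqrt a)
      \<longlongrightarrow> exp_erfc a 0) (at_right 0)"
    unfolding divide_inverse exp_erfc_0 by (rule tendsto_mult_right)
  moreover have "\<forall>\<^sub>F t in at_right 0.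
      exp (a * of_real t) * Erfc (csqrt a * of_real (sqrt t)) / csqrt a = exp_erfc a t"
    using eventually_at_right_less[of 0]
    by eventually_elim (simp add: exp_erfc_def csqrt_mult_of_real)
  ultimately show ?thesis
    by (rule Lim_transform_eventually)
qed

lemma has_vector_derivative_exp_erfc:
  assumes "a \<notin> \<real>\<^sub>\<le>\<^sub>0" "0 < \<tau>"
  shows "(exp_erfc a has_vector_derivative a * exp_erfc a \<tau> - 1 / of_real (sqrt (pi * \<tau>))) (at \<tau>)"
proof -
  let ?w = "of_real \<tau> :: complex"
  have nonpos: "a * ?w \<notin> \<real>\<^sub>\<le>\<^sub>0"
    using assms by (auto simp: complex_nonpos_Reals_iff mult_le_0_iff)
  have "csqrt (a * ?w) = csqrt a * of_real (sqrt \<tau>)"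
    using assms by (simp add: csqrt_mult_of_real)
  moreover have "csqrt a * csqrt a = a" "csqrt a \<noteq> 0" "sqrt \<tau> \<noteq> 0"
    "(of_real (sqrt \<tau>))\<^sup>2 = ?w"
    using assms by (auto simp flip: power2_eq_square of_real_power)
  ultimately have "((\<lambda>w. exp (a * w) * Erfc (csqrt (a * w)) / csqrt a) has_field_derivative
      a * exp_erfc a \<tau> - 1 / of_real (sqrt (pi * \<tau>))) (at ?w)"
    using nonpos
    by (auto intro!: derivative_eq_intros DERIV_chain2[OF has_field_derivative_Erfc]
        simp: exp_erfc_def exp_minus real_sqrt_mult field_simps)
  then show ?thesis
    unfolding exp_erfc_def [abs_def] by (rule has_vector_derivative_real_field)
qed

lemma integral_dominated_convergence_at_within:
  fixes s :: "real \<Rightarrow> 'a \<Rightarrow> 'b::{banach, second_countable_topology}" and w :: "'a \<Rightarrow> real"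
  assumes "f \<in> borel_measurable M" "\<And>t. s t \<in> borel_measurable M" "integrable M w"
    and lim: "AE x in M. ((\<lambda>i. s i x) \<longlongrightarrow> f x) (at t0 within S)"
    and bound: "\<forall>\<^sub>F i in at t0 within S. AE x in M. norm (s i x) \<le> w x"
  shows "((\<lambda>t. integral\<^sup>L M (s t)) \<longlongrightarrow> integral\<^sup>L M f) (at t0 within S)"
  unfolding tendsto_at_iff_sequentially
proof (intro allI impI)
  fix X :: "nat \<Rightarrow> real" assume XS: "\<forall>i. X i \<in> S - {t0}" and X0: "X \<longlonglongrightarrow> t0"
  have X: "filterlim X (at t0 within S) sequentially"
    using XS X0 by (auto simp: filterlim_at)
  from filterlim_iff[THEN iffD1, OF X, rule_format, OF bound]
  obtain N where w: "\<And>n. N \<le> n \<Longrightarrow> AE x in M. norm (s (X n) x) \<le> w x"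
    by (auto simp: eventually_sequentially)
  show "((\<lambda>t. integral\<^sup>L M (s t)) \<circ> X) \<longlonglongrightarrow> integral\<^sup>L M f"
    unfolding comp_def
  proof (rule LIMSEQ_offset, rule integral_dominated_convergence)
    show "AE x in M. norm (s (X (n + N)) x) \<le> w x" for n
      by (rule w) auto
    show "AE x in M. (\<lambda>n. s (X (n + N)) x) \<longlonglongrightarrow> f x"
      using lim by eventually_elim (intro LIMSEQ_ignore_initial_segment filterlim_compose[OF _ X])
  qed (use assms in auto)
qed

lemma has_vector_derivative_of_difference_quotient:
  fixes f :: "real \<Rightarrow> 'a::real_normed_vector"
  assumes "((\<lambda>y. (f y - f x) /\<^sub>R (y - x)) \<longlongrightarrow> D) (at x within S)"
  shows "(f has_vector_derivative D) (at x within S)"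
proof -
  have "((\<lambda>y. norm ((f y - f x) /\<^sub>R (y - x) - D)) \<longlongrightarrow> 0) (at x within S)"
    using tendsto_diff[OF assms tendsto_const[of D]] by (simp add: tendsto_norm_zero_iff)
  moreover have "\<forall>\<^sub>F y in at x within S. norm ((f y - f x) /\<^sub>R (y - x) - D) =
      norm ((1 / norm (y - x)) *\<^sub>R (f y - (f x + (y - x) *\<^sub>R D)))"
    unfolding eventually_at_filter
  proof (intro always_eventually allI impI)
    fix y
    assume "y \<noteq> x"
    then have "(f y - f x) /\<^sub>R (y - x) - D = (1 / (y - x)) *\<^sub>R (f y - (f x + (y - x) *\<^sub>R D))"
      by (simp add: scaleR_diff_right scaleR_add_right divide_inverse)
    then show "norm ((f y - f x) /\<^sub>R (y - x) - D) =
        norm ((1 / norm (y - x)) *\<^sub>R (f y - (f x + (y - x) *\<^sub>R D)))"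
      by simp
  qed
  ultimately have "((\<lambda>y. norm ((1 / norm (y - x)) *\<^sub>R (f y - (f x + (y - x) *\<^sub>R D)))) \<longlongrightarrow> 0)
      (at x within S)"
    by (rule Lim_transform_eventually)
  then have "((\<lambda>y. (1 / norm (y - x)) *\<^sub>R (f y - (f x + (y - x) *\<^sub>R D))) \<longlongrightarrow> 0) (at x within S)"
    by (rule tendsto_norm_zero_cancel)
  then show ?thesis
    unfolding has_vector_derivative_def has_derivative_within
    by (simp add: bounded_linear_scaleR_left)
qed

lemma mult_exp_neg_le:
  fixes c x :: real
  assumes "0 < c"
  shows "x * exp (- (c * x)) \<le> 1 / c"
proof -
  have "c * x \<le> exp (c * x)"
    using exp_ge_add_one_self[of "c * x"] by linarith
  with assms show ?thesis
    by (simp add: exp_minus field_simps mult.commute)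
qed

lemma abs_exp_neg_diff_le:
  fixes h \<tau> m s :: real
  assumes "0 < m" "m \<le> h" "m \<le> \<tau>" "0 \<le> s"
  shows "\<bar>exp (- (h * s)) - exp (- (\<tau> * s))\<bar> \<le> \<bar>h - \<tau>\<bar> / m"
proof -
  have le: "exp (- (p * s)) - exp (- (q * s)) \<le> \<bar>p - q\<bar> / m" if "m \<le> p" "m \<le> q" for p q
  proof (cases "p \<le> q")
    case True
    have "exp (- (p * s)) - exp (- (q * s)) = exp (- (p * s)) * (1 - exp (- ((q - p) * s)))"
      by (simp add: algebra_simps flip: exp_add)
    also have "\<dots> \<le> exp (- (m * s)) * ((q - p) * s)"
      using True that assms exp_ge_add_one_self[of "- ((q - p) * s)"]
      by (intro mult_mono) (auto simp: mult_right_mono)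
    also have "\<dots> = (q - p) * (s * exp (- (m * s)))"
      by simp
    also have "\<dots> \<le> (q - p) * (1 / m)"
      using True assms by (intro mult_left_mono mult_exp_neg_le) auto
    finally show ?thesis
      using True by simp
  next
    case False
    then have "exp (- (p * s)) \<le> exp (- (q * s))"
      using assms by (simp add: mult_right_mono)
    moreover have "0 \<le> \<bar>p - q\<bar> / m"
      using assms by simp
    ultimately show ?thesis
      by linarith
  qed
  show ?thesis
    using le[of h \<tau>] le[of \<tau> h] assms by (simp add: abs_le_iff abs_minus_commute)
qed

lemma integral_lborel_pos:
  fixes f :: "real \<Rightarrow> real"
  assumes "integrable lborel f" "AE t in lborel. 0 \<le> f t" "\<And>t. 0 < t \<Longrightarrow> 0 < f t"
  shows "0 < integral\<^sup>L lborel f"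
proof -
  have "\<not> (AE t in lborel. f t = 0)"
  proof
    assume "AE t in lborel. f t = 0"
    then have "AE t in lborel. t \<notin> {1..2::real}"
    proof eventually_elim
      case (elim t)
      show ?case
        using assms(3)[of t] elim by auto
    qed
    then obtain N where N: "{t \<in> space lborel. \<not> t \<notin> {1..2::real}} \<subseteq> N"
      "emeasure lborel N = 0" "N \<in> sets lborel"
      by (rule AE_E)
    from N(1) have "{1..2::real} \<subseteq> N"
      by auto
    then have "emeasure lborel {1..2::real} \<le> emeasure lborel N"
      using N(3) by (rule emeasure_mono)
    with N(2) show False
      by simp
  qed
  with integral_nonneg_eq_0_iff_AE[OF assms(1,2)] integral_nonneg_AE[OF assms(2)] show ?thesis
    by simp
qed

lemma linear_ode_eq_0:
  fixes D :: "real \<Rightarrow> complex"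
  assumes D': "\<And>t. 0 < t \<Longrightarrow> (D has_vector_derivative a * D t) (at t)"
    and D0: "(D \<longlongrightarrow> 0) (at_right 0)"
    and "0 < \<tau>"
  shows "D \<tau> = 0"
proof -
  define E where "E t = exp (- (a * of_real t)) * D t" for t
  have E': "(E has_vector_derivative 0) (at t within {0<..})" if "0 < t" for t
  proof -
    have "((\<lambda>z. exp (- (a * z))) has_field_derivative exp (- (a * of_real t)) * (- a)) (at (of_real t))"
      by (auto intro!: derivative_eq_intros)
    from has_vector_derivative_real_field[OF this]
    have "((\<lambda>s. exp (- (a * of_real s))) has_vector_derivative exp (- (a * of_real t)) * (- a)) (at t)" .
    from has_vector_derivative_mult[OF this D'[OF that]]
    have "(E has_vector_derivative 0) (at t)"
      unfolding E_def [abs_def] by (rule has_vector_derivative_eq_rhs) (simp add: algebra_simps)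
    then show ?thesis
      by (rule has_vector_derivative_at_within)
  qed
  obtain C where C: "\<And>t. t \<in> {0<..} \<Longrightarrow> E t = C"
    by (rule has_vector_derivative_zero_constant[of "{0<..}" E]) (auto intro: E')
  have "(E \<longlongrightarrow> exp (- (a * of_real 0)) * 0) (at_right 0)"
    unfolding E_def [abs_def] by (intro tendsto_intros D0)
  moreover have "(E \<longlongrightarrow> C) (at_right 0)"
    using eventually_at_right_less[of 0] by (rule tendsto_eventually[OF eventually_mono]) (simp add: C)
  ultimately have "C = 0"
    using tendsto_unique[OF trivial_limit_at_right_real] by force
  with C[of \<tau>] \<open>0 < \<tau>\<close> show ?thesis
    by (simp add: E_def)
qed

section \<open>The Gaussian transform on the half-line\<close>

definition gaussian_kernel :: "real \<Rightarrow> real \<Rightarrow> real" where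
  "gaussian_kernel \<tau> t = indicator {0..} t * exp (- (\<tau> * t\<^sup>2))"

definition gaussian_transform :: "(real \<Rightarrow> 'a::{banach, second_countable_topology}) \<Rightarrow> real \<Rightarrow> 'a" where
  "gaussian_transform g \<tau> = integral\<^sup>L lborel (\<lambda>t. gaussian_kernel \<tau> t *\<^sub>R g t)"

lemma borel_measurable_gaussian_kernel [measurable]: "gaussian_kernel \<tau> \<in> borel_measurable borel"
  unfolding gaussian_kernel_def [abs_def] by measurable

lemma gaussian_kernel_nonneg: "0 \<le> gaussian_kernel \<tau> t"
  by (simp add: gaussian_kernel_def)

lemma gaussian_kernel_pos: "0 < t \<Longrightarrow> 0 < gaussian_kernel \<tau> t"
  by (simp add: gaussian_kernel_def)

lemma gaussian_kernel_le_1: "0 \<le> \<tau> \<Longrightarrow> gaussian_kernel \<tau> t \<le> 1"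
  by (simp add: gaussian_kernel_def indicator_def)

lemma gaussian_kernel_mult_square_le: "0 < \<tau> \<Longrightarrow> gaussian_kernel \<tau> t * t\<^sup>2 \<le> 1 / \<tau>"
  using mult_exp_neg_le[of \<tau> "t\<^sup>2"] by (auto simp: gaussian_kernel_def indicator_def mult.commute)

lemma abs_gaussian_kernel_diff_quotient_le:
  assumes "0 < \<tau>" "\<tau> / 2 < \<sigma>"
  shows "\<bar>gaussian_kernel \<sigma> t - gaussian_kernel \<tau> t\<bar> / \<bar>\<sigma> - \<tau>\<bar> \<le> 2 / \<tau>"
proof (cases "\<sigma> = \<tau>")
  case False
  have "\<bar>gaussian_kernel \<sigma> t - gaussian_kernel \<tau> t\<bar> \<le> \<bar>\<sigma> - \<tau>\<bar> / (\<tau> / 2)"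
    using abs_exp_neg_diff_le[of "\<tau> / 2" \<sigma> \<tau> "t\<^sup>2"] assms
    by (auto simp: gaussian_kernel_def indicator_def)
  with False show ?thesis
    by (simp add: divide_le_eq field_simps)
qed (use assms in simp)

lemma has_real_derivative_gaussian_kernel:
  "((\<lambda>\<sigma>. gaussian_kernel \<sigma> t) has_real_derivative - (gaussian_kernel \<tau> t * t\<^sup>2)) (at \<tau>)"
  unfolding gaussian_kernel_def by (auto intro!: derivative_eq_intros)

lemma tendsto_gaussian_kernel_at_top:
  assumes "t \<noteq> 0"
  shows "((\<lambda>\<tau>. gaussian_kernel \<tau> t) \<longlongrightarrow> 0) at_top"
proof -
  have "filterlim (\<lambda>\<tau>. \<tau> * t\<^sup>2) at_top at_top"
    using assms by (intro filterlim_at_top_mult_tendsto_pos[OF tendsto_const _ filterlim_ident]) simp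
  then have "((\<lambda>\<tau>. exp (- (\<tau> * t\<^sup>2))) \<longlongrightarrow> 0) at_top"
    by (intro exp_at_bot[THEN filterlim_compose]) (simp add: filterlim_uminus_at_bot)
  from tendsto_mult_left[OF this, of "indicator {0..} t"] show ?thesis
    by (simp add: gaussian_kernel_def)
qed

lemma has_bochner_integral_gaussian_kernel:
  assumes "0 < \<tau>"
  shows "has_bochner_integral lborel (gaussian_kernel \<tau>) (sqrt pi / (2 * sqrt \<tau>))"
proof -
  have "sqrt \<tau> \<noteq> 0"
    using assms by simp
  from lborel_has_bochner_integral_real_affine_iff[where t = 0, THEN iffD1, OF this gaussian_moment_0]
  have "has_bochner_integral lborel
      (\<lambda>t. indicator {0..} (0 + sqrt \<tau> * t) *\<^sub>R exp (- (0 + sqrt \<tau> * t)\<^sup>2))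
      ((sqrt pi / 2) /\<^sub>R \<bar>sqrt \<tau>\<bar>)" .
  moreover have "(\<lambda>t. indicator {0..} (0 + sqrt \<tau> * t) *\<^sub>R exp (- (0 + sqrt \<tau> * t)\<^sup>2)) =
      gaussian_kernel \<tau>"
    using assms
    by (simp add: fun_eq_iff gaussian_kernel_def indicator_def zero_le_mult_iff power_mult_distrib)
  moreover have "(sqrt pi / 2) /\<^sub>R \<bar>sqrt \<tau>\<bar> = sqrt pi / (2 * sqrt \<tau>)"
    using assms by (simp add: abs_of_pos field_simps)
  ultimately show ?thesis
    by (simp only:)
qed

context
  fixes g :: "real \<Rightarrow> 'a::{banach, second_countable_topology}"
  assumes g: "integrable lborel g"
begin

declare borel_measurable_integrable[OF g, measurable]

lemma integrable_gaussian_kernel_scaleR: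
  assumes "0 \<le> \<tau>"
  shows "integrable lborel (\<lambda>t. gaussian_kernel \<tau> t *\<^sub>R g t)"
proof (rule Bochner_Integration.integrable_bound[OF integrable_norm[OF g]])
  show "AE t in lborel. norm (gaussian_kernel \<tau> t *\<^sub>R g t) \<le> norm (norm (g t))"
    using assms
    by (auto simp: gaussian_kernel_nonneg intro!: AE_I2 mult_left_le_one_le gaussian_kernel_le_1)
qed measurable

lemma integrable_gaussian_kernel_moment:
  assumes "0 < \<tau>"
  shows "integrable lborel (\<lambda>t. gaussian_kernel \<tau> t *\<^sub>R (t\<^sup>2 *\<^sub>R g t))"
proof (rule Bochner_Integration.integrable_bound)
  show "integrable lborel (\<lambda>t. 1 / \<tau> * norm (g t))"
    using g by auto
  show "AE t in lborel. norm (gaussian_kernel \<tau> t *\<^sub>R (t\<^sup>2 *\<^sub>R g t)) \<le> norm (1 / \<tau> * norm (g t))"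
  proof (rule AE_I2)
    fix t :: real
    have "gaussian_kernel \<tau> t * t\<^sup>2 * norm (g t) \<le> 1 / \<tau> * norm (g t)"
      using assms by (intro mult_right_mono gaussian_kernel_mult_square_le) auto
    then show "norm (gaussian_kernel \<tau> t *\<^sub>R (t\<^sup>2 *\<^sub>R g t)) \<le> norm (1 / \<tau> * norm (g t))"
      using assms by (simp add: abs_mult gaussian_kernel_nonneg)
  qed
qed measurable

lemma continuous_on_gaussian_transform: "continuous_on {0..} (gaussian_transform g)"
  unfolding continuous_on_def gaussian_transform_def
proof (intro ballI integral_dominated_convergence_at_within[where w = "\<lambda>t. norm (g t)"])
  fix \<tau> :: real
  show "AE t in lborel. ((\<lambda>\<sigma>. gaussian_kernel \<sigma> t *\<^sub>R g t) \<longlongrightarrow> gaussian_kernel \<tau> t *\<^sub>R g t)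
      (at \<tau> within {0..})"
  proof (rule AE_I2)
    fix t :: real
    have "isCont (\<lambda>\<sigma>. gaussian_kernel \<sigma> t) \<tau>"
      by (rule DERIV_isCont[OF has_real_derivative_gaussian_kernel])
    then have "((\<lambda>\<sigma>. gaussian_kernel \<sigma> t) \<longlongrightarrow> gaussian_kernel \<tau> t) (at \<tau> within {0..})"
      using isContD tendsto_within_subset by blast
    then show "((\<lambda>\<sigma>. gaussian_kernel \<sigma> t *\<^sub>R g t) \<longlongrightarrow> gaussian_kernel \<tau> t *\<^sub>R g t)
        (at \<tau> within {0..})"
      by (rule tendsto_scaleR) simp
  qed
  show "\<forall>\<^sub>F \<sigma> in at \<tau> within {0..}. AE t in lborel. norm (gaussian_kernel \<sigma> t *\<^sub>R g t) \<le> norm (g t)"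
    unfolding eventually_at_filter
    by (rule always_eventually)
       (auto simp: gaussian_kernel_nonneg intro!: AE_I2 mult_left_le_one_le gaussian_kernel_le_1)
  show "integrable lborel (\<lambda>t. norm (g t))"
    using g by simp
qed measurable

lemma tendsto_gaussian_transform_at_top: "(gaussian_transform g \<longlongrightarrow> 0) at_top"
proof -
  have "AE t in lborel. ((\<lambda>\<tau>. gaussian_kernel \<tau> t *\<^sub>R g t) \<longlongrightarrow> 0) at_top"
    using AE_lborel_singleton[of 0]
    by eventually_elim (use tendsto_scaleR[OF tendsto_gaussian_kernel_at_top tendsto_const] in simp)
  moreover have "\<forall>\<^sub>F \<tau> in at_top. AE t in lborel. norm (gaussian_kernel \<tau> t *\<^sub>R g t) \<le> norm (g t)"
    using eventually_ge_at_top[of 0]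
    by eventually_elim
       (auto simp: gaussian_kernel_nonneg intro!: AE_I2 mult_left_le_one_le gaussian_kernel_le_1)
  ultimately have "(gaussian_transform g \<longlongrightarrow> integral\<^sup>L lborel (\<lambda>_::real. 0 :: 'a)) at_top"
    unfolding gaussian_transform_def
    by (intro integral_dominated_convergence_at_top[OF _ _ integrable_norm[OF g]]) measurable
  then show ?thesis
    by simp
qed

lemma has_vector_derivative_gaussian_transform:
  assumes "0 < \<tau>"
  shows "(gaussian_transform g has_vector_derivative - gaussian_transform (\<lambda>t. t\<^sup>2 *\<^sub>R g t) \<tau>)
    (at \<tau>)"
proof (rule has_vector_derivative_of_difference_quotient)
  let ?q = "\<lambda>\<sigma> t. ((gaussian_kernel \<sigma> t - gaussian_kernel \<tau> t) / (\<sigma> - \<tau>)) *\<^sub>R g t"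
  have near: "\<forall>\<^sub>F \<sigma> in at \<tau>. \<tau> / 2 < \<sigma>"
    using assms by (intro order_tendstoD(1)[OF tendsto_ident_at]) simp
  have "((\<lambda>\<sigma>. integral\<^sup>L lborel (?q \<sigma>)) \<longlongrightarrow>
      integral\<^sup>L lborel (\<lambda>t. (- (gaussian_kernel \<tau> t * t\<^sup>2)) *\<^sub>R g t)) (at \<tau>)"
  proof (rule integral_dominated_convergence_at_within[where w = "\<lambda>t. 2 / \<tau> * norm (g t)"])
    show "AE t in lborel. ((\<lambda>\<sigma>. ?q \<sigma> t) \<longlongrightarrow> (- (gaussian_kernel \<tau> t * t\<^sup>2)) *\<^sub>R g t) (at \<tau>)"
      using has_real_derivative_gaussian_kernel
      by (intro AE_I2 tendsto_scaleR tendsto_const) (simp add: has_field_derivative_iff)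
    show "\<forall>\<^sub>F \<sigma> in at \<tau>. AE t in lborel. norm (?q \<sigma> t) \<le> 2 / \<tau> * norm (g t)"
      using near
    proof eventually_elim
      case (elim \<sigma>)
      have "norm (?q \<sigma> t) \<le> 2 / \<tau> * norm (g t)" for t
        using mult_right_mono[OF abs_gaussian_kernel_diff_quotient_le[OF assms elim] norm_ge_zero[of "g t"]]
        by simp
      then show ?case
        by (rule AE_I2)
    qed
    show "integrable lborel (\<lambda>t. 2 / \<tau> * norm (g t))"
      using g by simp
  qed measurable
  moreover have "\<forall>\<^sub>F \<sigma> in at \<tau>. integral\<^sup>L lborel (?q \<sigma>) =
      (gaussian_transform g \<sigma> - gaussian_transform g \<tau>) /\<^sub>R (\<sigma> - \<tau>)"
    using near
  proof eventually_elim
    case (elim \<sigma>)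
    have "?q \<sigma> = (\<lambda>t. (gaussian_kernel \<sigma> t *\<^sub>R g t - gaussian_kernel \<tau> t *\<^sub>R g t) /\<^sub>R (\<sigma> - \<tau>))"
      by (simp add: fun_eq_iff divide_inverse algebra_simps)
    then show ?case
      using Bochner_Integration.integral_diff[OF integrable_gaussian_kernel_scaleR
          integrable_gaussian_kernel_scaleR, of \<sigma> \<tau>] elim assms
      by (simp add: gaussian_transform_def)
  qed
  moreover have "integral\<^sup>L lborel (\<lambda>t. (- (gaussian_kernel \<tau> t * t\<^sup>2)) *\<^sub>R g t) =
      - gaussian_transform (\<lambda>t. t\<^sup>2 *\<^sub>R g t) \<tau>"
    by (simp add: gaussian_transform_def mult.commute)
  ultimately show "((\<lambda>\<sigma>. (gaussian_transform g \<sigma> - gaussian_transform g \<tau>) /\<^sub>R (\<sigma> - \<tau>)) \<longlongrightarrow>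
      - gaussian_transform (\<lambda>t. t\<^sup>2 *\<^sub>R g t) \<tau>) (at \<tau>)"
    by (simp add: Lim_transform_eventually)
qed

end

lemma gaussian_transform_diff:
  assumes "integrable lborel f" "integrable lborel g" "0 \<le> \<tau>"
  shows "gaussian_transform (\<lambda>t. f t - g t) \<tau> = gaussian_transform f \<tau> - gaussian_transform g \<tau>"
  using Bochner_Integration.integral_diff[OF integrable_gaussian_kernel_scaleR[OF assms(1,3)]
      integrable_gaussian_kernel_scaleR[OF assms(2,3)]]
  by (simp add: gaussian_transform_def scaleR_diff_right)

lemma gaussian_transform_mult_left:
  "gaussian_transform (\<lambda>t. c * f t) \<tau> = c * gaussian_transform f \<tau>" for c :: complex
proof -
  have "(\<lambda>t. gaussian_kernel \<tau> t *\<^sub>R (c * f t)) = (\<lambda>t. c * (gaussian_kernel \<tau> t *\<^sub>R f t))"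
    by (simp add: fun_eq_iff)
  then show ?thesis
    unfolding gaussian_transform_def by (simp only: integral_mult_right_zero)
qed

lemma gaussian_transform_of_real:
  "gaussian_transform (\<lambda>t. complex_of_real (f t)) \<tau> = of_real (gaussian_transform f \<tau>)"
proof -
  have "(\<lambda>t. gaussian_kernel \<tau> t *\<^sub>R complex_of_real (f t)) =
      (\<lambda>t. of_real (gaussian_kernel \<tau> t *\<^sub>R f t))"
    by (simp add: fun_eq_iff scaleR_conv_of_real)
  then show ?thesis
    unfolding gaussian_transform_def by (simp only: integral_complex_of_real)
qed

lemma gaussian_transform_pos:
  fixes g :: "real \<Rightarrow> real"
  assumes "integrable lborel (\<lambda>t. gaussian_kernel \<tau> t *\<^sub>R g t)" "\<And>t. 0 < t \<Longrightarrow> 0 < g t"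
  shows "0 < gaussian_transform g \<tau>"
  unfolding gaussian_transform_def
proof (rule integral_lborel_pos[OF assms(1)])
  show "0 < gaussian_kernel \<tau> t *\<^sub>R g t" if "0 < t" for t
    using that assms(2) by (simp add: gaussian_kernel_pos)
  have "0 \<le> gaussian_kernel \<tau> t *\<^sub>R g t" if "t \<noteq> 0" for t
    using that assms(2)[of t] by (cases "0 < t") (auto simp: gaussian_kernel_def)
  with AE_lborel_singleton[of 0] show "AE t in lborel. 0 \<le> gaussian_kernel \<tau> t *\<^sub>R g t"
    by (auto elim: eventually_mono)
qed

section \<open>The transform of \<open>1 / (t\<^sup>2 + a)\<close>\<close>

lemma of_real_add_nonzero:
  fixes a :: complex
  assumes "a \<notin> \<real>\<^sub>\<le>\<^sub>0" "0 \<le> u"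
  shows "of_real u + a \<noteq> 0"
  using assms by (auto simp: complex_nonpos_Reals_iff complex_eq_iff)

lemma norm_of_real_add_ge:
  fixes a :: complex
  assumes "a \<notin> \<real>\<^sub>\<le>\<^sub>0"
  obtains c where "0 < c" "\<And>u. 0 \<le> u \<Longrightarrow> c * (1 + u) \<le> cmod (of_real u + a)"
proof -
  define d where "d = infdist a \<real>\<^sub>\<le>\<^sub>0"
  have "0 < d"
    using assms unfolding d_def by (intro infdist_pos_not_in_closed) (auto intro: nonpos_Reals_zero_I)
  have d_le: "d \<le> cmod (of_real u + a)" if "0 \<le> u" for u
  proof -
    have "- of_real u \<in> (\<real>\<^sub>\<le>\<^sub>0 :: complex set)"
      using that by (simp add: complex_nonpos_Reals_iff)
    then have "d \<le> dist a (- of_real u)"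
      unfolding d_def by (rule infdist_le)
    then show ?thesis
      by (simp add: dist_norm add.commute)
  qed
  define c where "c = min d 1 / (2 * (cmod a + 1))"
  have den: "0 < 2 * (cmod a + 1)"
    by (smt (verit) norm_ge_zero)
  have "0 < c"
    using \<open>0 < d\<close> den unfolding c_def by (intro divide_pos_pos) auto
  moreover have "c * (1 + u) \<le> cmod (of_real u + a)" if "0 \<le> u" for u
  proof (cases "u \<le> 2 * cmod a + 1")
    case True
    have "c * (1 + u) \<le> c * (2 * (cmod a + 1))"
      using True \<open>0 < c\<close> by (intro mult_left_mono) auto
    also have "\<dots> = min d 1"
      using den by (simp add: c_def)
    also have "\<dots> \<le> cmod (of_real u + a)"
      using d_le[OF that] by linarith
    finally show ?thesis .
  next
    case False
    have "min d 1 \<le> cmod a + 1"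
      by (simp add: min.coboundedI2)
    then have "c \<le> 1 / 2"
      using den by (simp add: c_def divide_le_eq)
    then have "c * (1 + u) \<le> (1 + u) / 2"
      using that by (simp add: mult_right_mono)
    also have "\<dots> \<le> u - cmod a"
      using False by simp
    also have "\<dots> \<le> cmod (of_real u + a)"
      using norm_diff_ineq[of "of_real u" a] that by simp
    finally show ?thesis .
  qed
  ultimately show ?thesis
    by (rule that)
qed

lemma integrable_inverse_square_plus:
  fixes a :: complex
  assumes "a \<notin> \<real>\<^sub>\<le>\<^sub>0"
  shows "integrable lborel (\<lambda>t. 1 / (of_real (t\<^sup>2) + a))"
proof -
  obtain c where c: "0 < c" "\<And>u. 0 \<le> u \<Longrightarrow> c * (1 + u) \<le> cmod (of_real u + a)"
    using norm_of_real_add_ge[OF assms] by blast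
  have nz: "of_real (t\<^sup>2) + a \<noteq> 0" for t :: real
    using assms by (rule of_real_add_nonzero) simp
  have "integrable lborel (\<lambda>t::real. inverse c * inverse (1 + t\<^sup>2))"
    using integrable_inverse_1_plus_square
    by (intro integrable_mult_right) (simp add: set_integrable_def einterval_eq_UNIV)
  moreover have "(\<lambda>t. 1 / (of_real (t\<^sup>2) + a)) \<in> borel_measurable lborel"
    unfolding measurable_lborel2
    by (intro borel_measurable_continuous_onI continuous_intros) (use nz in simp)
  moreover have "norm (1 / (of_real (t\<^sup>2) + a)) \<le> norm (inverse c * inverse (1 + t\<^sup>2))" for t :: real
  proof -
    have "0 < c * (1 + t\<^sup>2)"
      using c(1) by (simp add: add_pos_nonneg)
    from le_imp_inverse_le[OF c(2)[of "t\<^sup>2"] this] c(1)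
    show ?thesis
      by (simp add: norm_divide inverse_eq_divide add_pos_nonneg)
  qed
  ultimately show ?thesis
    by (intro Bochner_Integration.integrable_bound[where g = "\<lambda>t. 1 / (of_real (t\<^sup>2) + a)"] AE_I2)
qed

lemma has_vector_derivative_Ln_diff:
  assumes "0 < Re c"
  shows "((\<lambda>t. Ln (of_real t - \<i> * c) - Ln (of_real t + \<i> * c)) has_vector_derivative
    2 * \<i> * c / (of_real (t\<^sup>2) + c\<^sup>2)) (at t)"
proof -
  have "of_real t - \<i> * c \<notin> \<real>\<^sub>\<le>\<^sub>0" "of_real t + \<i> * c \<notin> \<real>\<^sub>\<le>\<^sub>0"
    using assms by (auto simp: complex_nonpos_Reals_iff)
  moreover have "of_real t - \<i> * c \<noteq> 0" "of_real t + \<i> * c \<noteq> 0"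
    using assms by (auto simp: complex_eq_iff)
  moreover have "(of_real t - \<i> * c) * (of_real t + \<i> * c) = of_real (t\<^sup>2) + c\<^sup>2"
    by (simp add: algebra_simps power2_eq_square)
  ultimately have "((\<lambda>z. Ln (z - \<i> * c) - Ln (z + \<i> * c)) has_field_derivative
      2 * \<i> * c / (of_real (t\<^sup>2) + c\<^sup>2)) (at (of_real t))"
    by (auto intro!: derivative_eq_intros simp: field_simps)
  then show ?thesis
    by (rule has_vector_derivative_real_field)
qed

lemma tendsto_Ln_diff_at_top:
  "((\<lambda>t. Ln (of_real t - \<i> * c) - Ln (of_real t + \<i> * c)) \<longlongrightarrow> 0) at_top"
proof -
  have "((\<lambda>t. Ln (1 - \<i> * c * of_real (inverse t)) - Ln (1 + \<i> * c * of_real (inverse t)))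
      \<longlongrightarrow> Ln (1 - \<i> * c * of_real 0) - Ln (1 + \<i> * c * of_real 0)) at_top"
    by (intro tendsto_intros tendsto_inverse_0_at_top filterlim_ident
        continuous_at_Ln[THEN isContD, THEN tendsto_compose]) auto
  moreover have "\<forall>\<^sub>F t in at_top.
      Ln (1 - \<i> * c * of_real (inverse t)) - Ln (1 + \<i> * c * of_real (inverse t)) =
      Ln (of_real t - \<i> * c) - Ln (of_real t + \<i> * c)"
    using eventually_gt_at_top[of "cmod c"]
  proof eventually_elim
    case (elim t)
    then have "0 < t"
      using norm_ge_zero[of c] by linarith
    have nz: "of_real t + s * (\<i> * c) \<noteq> 0" if "s = 1 \<or> s = -1" for s :: complex
    proof
      assume "of_real t + s * (\<i> * c) = 0"
      then have "of_real t = - (s * (\<i> * c))"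
        by (simp add: eq_neg_iff_add_eq_0)
      then have "cmod (of_real t) = cmod (s * (\<i> * c))"
        by (metis norm_minus_cancel)
      with that \<open>0 < t\<close> have "t = cmod c"
        by (auto simp: norm_mult)
      with elim show False
        by simp
    qed
    have eq: "of_real t - \<i> * c = of_real t * (1 - \<i> * c * of_real (inverse t))"
      "of_real t + \<i> * c = of_real t * (1 + \<i> * c * of_real (inverse t))"
      using \<open>0 < t\<close> by (simp_all add: field_simps)
    have "1 - \<i> * c * of_real (inverse t) \<noteq> 0" "1 + \<i> * c * of_real (inverse t) \<noteq> 0"
      using nz[of "-1"] nz[of 1] eq by auto
    then show ?case
      unfolding eq using Ln_times_of_real[OF \<open>0 < t\<close>] by simp
  qed
  ultimately show ?thesis
    by (simp add: Lim_transform_eventually)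
qed

lemma gaussian_transform_inverse_square_plus_0:
  assumes "a \<notin> \<real>\<^sub>\<le>\<^sub>0"
  shows "gaussian_transform (\<lambda>t. 1 / (of_real (t\<^sup>2) + a)) 0 = of_real pi / (2 * csqrt a)"
proof -
  define c where "c = csqrt a"
  have "0 < Re c"
    unfolding c_def using assms by (rule Re_csqrt_pos)
  then have "c \<noteq> 0"
    by auto
  have a: "a = c\<^sup>2"
    by (simp add: c_def)
  define F where "F t = (Ln (of_real t - \<i> * c) - Ln (of_real t + \<i> * c)) / (2 * \<i> * c)" for t :: real
  let ?f = "\<lambda>t::real. 1 / (of_real (t\<^sup>2) + a)"
  have F': "(F has_vector_derivative ?f t) (at t)" for t
    using has_vector_derivative_divide[OF has_vector_derivative_Ln_diff[OF \<open>0 < Re c\<close>, of t],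
        where a = "2 * \<i> * c"] \<open>c \<noteq> 0\<close>
    unfolding F_def [abs_def] a by simp
  have F0: "F 0 = - (of_real pi / (2 * c))"
  proof -
    have "Ln (- (\<i> * c)) = Ln (\<i> * c) - \<i> * of_real pi"
      using Ln_minus[of "\<i> * c"] \<open>0 < Re c\<close> \<open>c \<noteq> 0\<close> by auto
    then have "F 0 = - (\<i> * of_real pi) / (2 * \<i> * c)"
      by (simp add: F_def)
    then show ?thesis
      using \<open>c \<noteq> 0\<close> by (simp add: field_simps)
  qed
  have "isCont F 0"
    using F' by (rule has_vector_derivative_continuous)
  then have "(F \<longlongrightarrow> F 0) (at_right 0)"
    by (simp add: isCont_def filterlim_at_split)
  moreover have "(F \<longlongrightarrow> 0) at_top"
    using tendsto_divide[OF tendsto_Ln_diff_at_top tendsto_const[of "2 * \<i> * c"]] \<open>c \<noteq> 0\<close>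
    unfolding F_def [abs_def] by simp
  moreover have "isCont ?f t" for t
    using of_real_add_nonzero[OF assms, of "t\<^sup>2"] by (intro continuous_intros) auto
  moreover have "set_integrable lborel (einterval 0 \<infinity>) ?f"
    unfolding set_integrable_def
    using integrable_inverse_square_plus[OF assms] by (rule integrable_mult_indicator[rotated]) simp
  ultimately have "(LBINT t=0..\<infinity>. ?f t) = 0 - F 0"
    by (intro interval_integral_FTC_integrable[where F = F] F')
       (auto simp: zero_ereal_def ereal_tendsto_simps)
  moreover have "gaussian_transform ?f 0 = (LBINT t=0..\<infinity>. ?f t)"
    unfolding gaussian_transform_def interval_lebesgue_integral_0_infty set_lebesgue_integral_def
    using AE_lborel_singleton[of 0]
    by (intro integral_cong_AE) (auto simp: gaussian_kernel_def indicator_def elim!: eventually_mono)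
  ultimately show ?thesis
    using F0 by (simp add: c_def)
qed

lemma has_vector_derivative_gaussian_transform_inverse_square_plus:
  fixes a :: complex
  assumes "a \<notin> \<real>\<^sub>\<le>\<^sub>0" "0 < \<tau>"
  shows "(gaussian_transform (\<lambda>t. 1 / (of_real (t\<^sup>2) + a)) has_vector_derivative
    a * gaussian_transform (\<lambda>t. 1 / (of_real (t\<^sup>2) + a)) \<tau> - of_real (sqrt pi / (2 * sqrt \<tau>)))
    (at \<tau>)"
proof -
  let ?f = "\<lambda>t::real. 1 / (of_real (t\<^sup>2) + a)"
  let ?k = "gaussian_kernel \<tau>"
  have int: "integrable lborel ?f"
    using assms(1) by (rule integrable_inverse_square_plus)
  have "of_real (t\<^sup>2) + a \<noteq> 0" for t :: real
    using assms(1) by (rule of_real_add_nonzero) simp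
  then have "(\<lambda>t. ?k t *\<^sub>R (t\<^sup>2 *\<^sub>R ?f t)) = (\<lambda>t. of_real (?k t) - a * (?k t *\<^sub>R ?f t))"
    by (simp add: fun_eq_iff scaleR_conv_of_real field_simps)
  then have "gaussian_transform (\<lambda>t. t\<^sup>2 *\<^sub>R ?f t) \<tau> =
      integral\<^sup>L lborel (\<lambda>t. of_real (?k t) - a * (?k t *\<^sub>R ?f t))"
    by (simp only: gaussian_transform_def)
  also have "\<dots> = integral\<^sup>L lborel (\<lambda>t. complex_of_real (?k t)) - integral\<^sup>L lborel (\<lambda>t. a * (?k t *\<^sub>R ?f t))"
  proof (rule Bochner_Integration.integral_diff)
    show "integrable lborel (\<lambda>t. complex_of_real (?k t))"
      unfolding complex_of_real_integrable_eq
      by (rule integrable.intros[OF has_bochner_integral_gaussian_kernel[OF assms(2)]])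
    show "integrable lborel (\<lambda>t. a * (?k t *\<^sub>R ?f t))"
      using assms(2) by (intro integrable_mult_right integrable_gaussian_kernel_scaleR[OF int]) simp
  qed
  also have "\<dots> = of_real (sqrt pi / (2 * sqrt \<tau>)) - a * gaussian_transform ?f \<tau>"
    by (simp only: integral_complex_of_real integral_mult_right_zero gaussian_transform_def
        has_bochner_integral_integral_eq[OF has_bochner_integral_gaussian_kernel[OF assms(2)]])
  finally have "gaussian_transform (\<lambda>t. t\<^sup>2 *\<^sub>R ?f t) \<tau> =
      of_real (sqrt pi / (2 * sqrt \<tau>)) - a * gaussian_transform ?f \<tau>" .
  with has_vector_derivative_gaussian_transform[OF int assms(2)] show ?thesis
    by simp
qed

theorem exp_erfc_eq_gaussian_transform:
  assumes "a \<notin> \<real>\<^sub>\<le>\<^sub>0" "0 \<le> \<tau>"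
  shows "exp_erfc a \<tau> = of_real (2 / pi) * gaussian_transform (\<lambda>t. 1 / (of_real (t\<^sup>2) + a)) \<tau>"
proof -
  let ?G = "gaussian_transform (\<lambda>t. 1 / (of_real (t\<^sup>2) + a))"
  define D where "D t = exp_erfc a t - of_real (2 / pi) * ?G t" for t
  have "csqrt a \<noteq> 0"
    using assms(1) by auto
  then have D0: "D 0 = 0"
    unfolding D_def gaussian_transform_inverse_square_plus_0[OF assms(1)] by (simp add: field_simps)
  have "(?G \<longlongrightarrow> ?G 0) (at 0 within {0..})"
    using continuous_on_gaussian_transform[OF integrable_inverse_square_plus[OF assms(1)]]
    by (simp add: continuous_on_def)
  then have "(?G \<longlongrightarrow> ?G 0) (at_right 0)"
    by (rule tendsto_within_subset) auto
  then have "(D \<longlongrightarrow> D 0) (at_right 0)"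
    unfolding D_def [abs_def] by (intro tendsto_intros tendsto_exp_erfc_at_right_0)
  moreover have "(D has_vector_derivative a * D t) (at t)" if "0 < t" for t
  proof -
    let ?c = "complex_of_real (2 / pi)" and ?r = "complex_of_real (sqrt pi / (2 * sqrt t))"
      and ?s = "1 / complex_of_real (sqrt (pi * t))"
    have "2 / pi * (sqrt pi / (2 * sqrt t)) = 1 / sqrt (pi * t)"
      using that by (simp add: real_sqrt_mult field_simps)
    then have key: "?c * ?r = ?s"
      by (metis of_real_1 of_real_divide of_real_mult)
    have deriv: "(D has_vector_derivative (a * exp_erfc a t - ?s) - ?c * (a * ?G t - ?r)) (at t)"
      unfolding D_def [abs_def]
      by (intro has_vector_derivative_diff has_vector_derivative_mult_right
          has_vector_derivative_exp_erfc[OF assms(1) that]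
          has_vector_derivative_gaussian_transform_inverse_square_plus[OF assms(1) that])
    have "(a * exp_erfc a t - ?s) - ?c * (a * ?G t - ?r) = a * D t + (?c * ?r - ?s)"
      by (simp add: D_def algebra_simps)
    then have "(a * exp_erfc a t - ?s) - ?c * (a * ?G t - ?r) = a * D t"
      unfolding key by simp
    with deriv show ?thesis
      by simp
  qed
  ultimately have "D \<tau> = 0"
    using D0 linear_ode_eq_0[of D a \<tau>] assms(2) by (cases "\<tau> = 0") auto
  then show ?thesis
    by (simp add: D_def)
qed

section \<open>The function \<open>u0\<close>\<close>

lemma inverse_add_diff_inverse_add_cnj:
  assumes "Im \<alpha> \<noteq> 0"
  shows "1 / (of_real s + \<alpha>) - 1 / (of_real s + cnj \<alpha>) =
    - (\<alpha> - cnj \<alpha>) * of_real (1 / (cmod (of_real s + \<alpha>))\<^sup>2)"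
proof -
  let ?z = "of_real s + \<alpha>"
  have "?z \<noteq> 0" "cnj ?z \<noteq> 0"
    using assms by (auto simp: complex_eq_iff)
  moreover have "complex_of_real (1 / (cmod ?z)\<^sup>2) = 1 / (?z * cnj ?z)"
    by (simp only: of_real_divide of_real_1 complex_norm_square)
  ultimately show ?thesis
    by (simp add: field_simps)
qed

lemma integrable_inverse_norm_square_plus:
  assumes "Im \<alpha> \<noteq> 0"
  shows "integrable lborel (\<lambda>t. 1 / (cmod (of_real (t\<^sup>2) + \<alpha>))\<^sup>2)"
proof -
  have nonpos: "\<alpha> \<notin> \<real>\<^sub>\<le>\<^sub>0" "cnj \<alpha> \<notin> \<real>\<^sub>\<le>\<^sub>0"
    using assms by (auto simp: complex_nonpos_Reals_iff)
  have "\<alpha> - cnj \<alpha> \<noteq> 0"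
    using assms by (auto simp: complex_eq_iff)
  then have cancel: "- 1 / (\<alpha> - cnj \<alpha>) * (- (\<alpha> - cnj \<alpha>) * y) = y" for y
    by (simp add: field_simps)
  have "(\<lambda>t. - 1 / (\<alpha> - cnj \<alpha>) * (1 / (of_real (t\<^sup>2) + \<alpha>) - 1 / (of_real (t\<^sup>2) + cnj \<alpha>))) =
      (\<lambda>t. complex_of_real (1 / (cmod (of_real (t\<^sup>2) + \<alpha>))\<^sup>2))"
    unfolding inverse_add_diff_inverse_add_cnj[OF assms] cancel ..
  moreover have "integrable lborel
      (\<lambda>t. - 1 / (\<alpha> - cnj \<alpha>) * (1 / (of_real (t\<^sup>2) + \<alpha>) - 1 / (of_real (t\<^sup>2) + cnj \<alpha>)))"
    by (intro integrable_mult_right Bochner_Integration.integrable_diff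
        integrable_inverse_square_plus nonpos)
  ultimately show ?thesis
    by (simp only: complex_of_real_integrable_eq)
qed

lemma u0_eq_gaussian_transform:
  assumes "Im \<alpha> \<noteq> 0" "\<beta> = cnj \<alpha>" "0 \<le> \<tau>"
  shows "u0 \<kappa> \<alpha> \<beta> \<tau> =
    of_real (1 - 2 / pi * sqrt \<kappa> * gaussian_transform (\<lambda>t. 1 / (cmod (of_real (t\<^sup>2) + \<alpha>))\<^sup>2) \<tau>)"
proof -
  let ?L = "gaussian_transform (\<lambda>t. 1 / (cmod (of_real (t\<^sup>2) + \<alpha>))\<^sup>2) \<tau>"
  have nonpos: "\<alpha> \<notin> \<real>\<^sub>\<le>\<^sub>0" "\<beta> \<notin> \<real>\<^sub>\<le>\<^sub>0"
    using assms(1,2) by (auto simp: complex_nonpos_Reals_iff)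
  have "\<alpha> - \<beta> \<noteq> 0"
    using assms(1,2) by (auto simp: complex_eq_iff)
  have "exp_erfc \<alpha> \<tau> - exp_erfc \<beta> \<tau> = of_real (2 / pi) *
      gaussian_transform (\<lambda>t. 1 / (of_real (t\<^sup>2) + \<alpha>) - 1 / (of_real (t\<^sup>2) + \<beta>)) \<tau>"
    unfolding exp_erfc_eq_gaussian_transform[OF nonpos(1) assms(3)]
      exp_erfc_eq_gaussian_transform[OF nonpos(2) assms(3)]
      gaussian_transform_diff[OF integrable_inverse_square_plus[OF nonpos(1)]
        integrable_inverse_square_plus[OF nonpos(2)] assms(3)]
    by (simp only: right_diff_distrib)
  also have "(\<lambda>t. 1 / (of_real (t\<^sup>2) + \<alpha>) - 1 / (of_real (t\<^sup>2) + \<beta>)) =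
      (\<lambda>t. - (\<alpha> - \<beta>) * of_real (1 / (cmod (of_real (t\<^sup>2) + \<alpha>))\<^sup>2))"
    unfolding assms(2) inverse_add_diff_inverse_add_cnj[OF assms(1)] ..
  also have "gaussian_transform \<dots> \<tau> = - (\<alpha> - \<beta>) * of_real ?L"
    by (simp only: gaussian_transform_mult_left gaussian_transform_of_real)
  finally have diff: "exp_erfc \<alpha> \<tau> - exp_erfc \<beta> \<tau> = of_real (2 / pi) * (- (\<alpha> - \<beta>) * of_real ?L)" .
  have cancel: "x / (\<alpha> - \<beta>) * (y * (- (\<alpha> - \<beta>) * z)) = - (y * x * z)" for x y z :: complex
    using \<open>\<alpha> - \<beta> \<noteq> 0\<close> by (simp add: field_simps)
  show ?thesis
    unfolding u0_eq_exp_erfc diff cancel by simp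
qed

lemma Re_u0_has_positive_derivative:
  assumes "0 < \<kappa>" "Im \<alpha> \<noteq> 0" "\<beta> = cnj \<alpha>" "0 < \<tau>"
  obtains D where "((\<lambda>t. Re (u0 \<kappa> \<alpha> \<beta> t)) has_real_derivative D) (at \<tau>)" "0 < D"
proof -
  let ?g = "\<lambda>t::real. 1 / (cmod (of_real (t\<^sup>2) + \<alpha>))\<^sup>2"
  let ?L = "gaussian_transform ?g"
  let ?D = "2 / pi * sqrt \<kappa> * gaussian_transform (\<lambda>t. t\<^sup>2 *\<^sub>R ?g t) \<tau>"
  have int: "integrable lborel ?g"
    using assms(2) by (rule integrable_inverse_norm_square_plus)
  have "(?L has_real_derivative - gaussian_transform (\<lambda>t. t\<^sup>2 *\<^sub>R ?g t) \<tau>) (at \<tau>)"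
    using has_vector_derivative_gaussian_transform[OF int assms(4)]
    by (simp add: has_real_derivative_iff_has_vector_derivative)
  then have "((\<lambda>t. 1 - 2 / pi * sqrt \<kappa> * ?L t) has_real_derivative ?D) (at \<tau>)"
    by (auto intro!: derivative_eq_intros)
  then have "((\<lambda>t. Re (u0 \<kappa> \<alpha> \<beta> t)) has_real_derivative ?D) (at \<tau>)"
    by (rule has_field_derivative_transform_within_open[where S = "{0<..}"])
       (use assms(4) u0_eq_gaussian_transform[OF assms(2,3)] in auto)
  moreover have "0 < gaussian_transform (\<lambda>t. t\<^sup>2 *\<^sub>R ?g t) \<tau>"
  proof (rule gaussian_transform_pos)
    show "integrable lborel (\<lambda>t. gaussian_kernel \<tau> t *\<^sub>R (t\<^sup>2 *\<^sub>R ?g t))"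
      using int assms(4) by (rule integrable_gaussian_kernel_moment)
    show "0 < t\<^sup>2 *\<^sub>R ?g t" if "0 < t" for t
      using that assms(2) by (auto simp: complex_eq_iff)
  qed
  with assms(1) have "0 < ?D"
    by simp
  ultimately show ?thesis
    by (rule that)
qed

lemma tendsto_Re_u0:
  assumes "Im \<alpha> \<noteq> 0" "\<beta> = cnj \<alpha>"
  shows "((\<lambda>t. Re (u0 \<kappa> \<alpha> \<beta> t)) \<longlongrightarrow> 1) at_top"
proof -
  let ?L = "gaussian_transform (\<lambda>t. 1 / (cmod (of_real (t\<^sup>2) + \<alpha>))\<^sup>2)"
  have "((\<lambda>t. 1 - 2 / pi * sqrt \<kappa> * ?L t) \<longlongrightarrow> 1 - 2 / pi * sqrt \<kappa> * 0) at_top"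
    by (intro tendsto_intros tendsto_gaussian_transform_at_top integrable_inverse_norm_square_plus assms(1))
  moreover have "\<forall>\<^sub>F t in at_top. 1 - 2 / pi * sqrt \<kappa> * ?L t = Re (u0 \<kappa> \<alpha> \<beta> t)"
    using eventually_ge_at_top[of 0]
    by eventually_elim (simp add: u0_eq_gaussian_transform[OF assms])
  ultimately show ?thesis
    by (simp add: Lim_transform_eventually)
qed

theorem theorem3p1:
  fixes \<kappa> :: real and \<alpha> \<beta> :: complex
  assumes "0 < \<kappa>" "\<kappa> < 4"
    and "\<alpha>\<^sup>2 + complex_of_real (2 - \<kappa>) * \<alpha> + 1 = 0"
    and "Im \<alpha> > 0"
    and "\<beta> = cnj \<alpha>"
  shows "(\<forall>\<tau>\<ge>0. Im (u0 \<kappa> \<alpha> \<beta> \<tau>) = 0)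
       \<and> (\<forall>\<tau>>0. ((\<lambda>t. Re (u0 \<kappa> \<alpha> \<beta> t)) has_real_derivative
                    deriv (\<lambda>t. Re (u0 \<kappa> \<alpha> \<beta> t)) \<tau>) (at \<tau>)
               \<and> deriv (\<lambda>t. Re (u0 \<kappa> \<alpha> \<beta> t)) \<tau> > 0)
       \<and> ((\<lambda>t. Re (u0 \<kappa> \<alpha> \<beta> t)) \<longlongrightarrow> 1) at_top"
proof -
  have im: "Im \<alpha> \<noteq> 0"
    using assms(4) by simp
  have "Im (u0 \<kappa> \<alpha> \<beta> \<tau>) = 0" if "0 \<le> \<tau>" for \<tau>
    using u0_eq_gaussian_transform[OF im assms(5) that] by simp
  moreover have "((\<lambda>t. Re (u0 \<kappa> \<alpha> \<beta> t)) has_real_derivative deriv (\<lambda>t. Re (u0 \<kappa> \<alpha> \<beta> t)) \<tau>) (at \<tau>)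
      \<and> deriv (\<lambda>t. Re (u0 \<kappa> \<alpha> \<beta> t)) \<tau> > 0" if \<tau>: "0 < \<tau>" for \<tau>
  proof -
    obtain D where "((\<lambda>t. Re (u0 \<kappa> \<alpha> \<beta> t)) has_real_derivative D) (at \<tau>)" "0 < D"
      using Re_u0_has_positive_derivative[OF assms(1) im assms(5) \<tau>] .
    then show ?thesis
      by (simp add: DERIV_imp_deriv)
  qed
  moreover have "((\<lambda>t. Re (u0 \<kappa> \<alpha> \<beta> t)) \<longlongrightarrow> 1) at_top"
    using im assms(5) by (rule tendsto_Re_u0)
  ultimately show ?thesis
    by blast
qed

end
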